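(* Consider a finite game in extensive form with perfect recall whose information sets are ordered by a precedence relation. For any initial profile $\bar\beta^1$ of full-support belief systems, the set of terminal histories reached by profiles of strong level-1 strategies coincides with the set of terminal histories reached by profiles of backward level-1 strategies: $Z(\bar L^1(\bar\beta^1))=Z(\vec L^1(\bar\beta^1))$.
   Context: Setting: a finite extensive-form game with finite player set $N$, possibly moves of nature (treated as a player with singleton information sets), finite horizon and perfect recall; information sets of all players are partially ordered by precedence ($I\preceq I'$ if $I$ precedes $I'$). $Z$ is the set of terminal histories, $u_i:Z\to\mathbb R$ player $i$'s utility, $\mathcal I_i$ player $i$'s information sets, $S_i$ her strategies (maps assigning an available action to each $I_i$), $S_{-i}$ the product of other players' and nature's strategy sets, $z(s)$ the terminal history reached by $s$. A profile $s_{-i}$ reaches $I_i$ if some $s_i$ makes $(s_i,s_{-i})$ reach $I_i$; $s_i$ reaches $I_i$ if some $s_{-i}$ makes $(s_i,s_{-i})$ reach $I_i$; $S_{-i}(I_i)$ is the set of $s_{-i}$ reaching $I_i$. For sets $X_j\subseteq S_j$, $Z(\times_{j\in N}X_j)=\{z(s):s_j\in X_j\ \forall j\in N,\ s_c\in S_c\}$. A belief system $\bar\beta_i$ gives for each $I_i$ a belief $\bar\beta_i(I_i)\in\Delta(S_{-i})$ with $\bar\beta_i(I_i)(S_{-i}(I_i))=1$, updated by conditioning whenever possible along preceding information sets; it is full-support if each $\bar\beta_i(I_i)$ gives positive probability to every element of $S_{-i}(I_i)$. $s_i'$ is an $I_i$-replacement of $s_i$ if it agrees with $s_i$ on information sets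 strictly preceding $I_i$. $s_i$ is rational at $I_i$ given $\bar\beta_i(I_i)$ if $s_i$ does not reach $I_i$ or no $I_i$-replacement of $s_i$ yields strictly higher expected utility with respect to $\bar\beta_i(I_i)$. Continuation strategy: $s_{i\mid I_i}$ is the restriction of $s_i$ to information sets $I'\in\mathcal I_i$ with $I_i\preceq I'$. $s_{i\mid I_i}$ is rational at $I_i$ given $\bar\beta_i(I_i)$ if a strategy that reaches $I_i$ and coincides with $s_i$ on information sets $I'$ with $I_i\preceq I'$ is rational at $I_i$ given $\bar\beta_i(I_i)$ (i.e., the continuation play from $I_i$ is optimal regardless of whether $s_i$ itself reaches $I_i$). Strong level-1: $\bar L_i^1(\bar\beta^1)=\{s_i: s_i\text{ is rational at every } I_i\in\mathcal I_i \text{ given } \bar\beta^1_i(I_i)\}$. Backward level-1: $\vec L_i^1(\bar\beta^1)=\{s_i: \text{for every } I_i\in\mathcal I_i,\ s_{i\mid I_i}\text{ is rational at } I_i\text{ given }\bar\beta_i^1(I_i)\}$. $\bar L^1=\times_{i\in N}\bar L^1_i$, $\vec L^1=\times_{i\in N}\vec L^1_i$. *)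

theory Defs
  imports "HOL-Probability.Probability_Mass_Function" "HOL-Library.Sublist" "HOL-Library.FuncSet"
begin

record ('p, 'a) efg =
  players :: "'p set"
  nature  :: 'p
  hist    :: "'a list set"
  turn    :: "'a list \<Rightarrow> 'p"
  infoset :: "'a list \<Rightarrow> 'a list set"

type_synonym ('p, 'a) strat = "'a list set \<Rightarrow> 'a"
type_synonym ('p, 'a) profile = "'p \<Rightarrow> ('p, 'a) strat"

definition agents :: "('p,'a) efg \<Rightarrow> 'p set" where
  "agents G = insert (nature G) (players G)"

definition nonterm_hist :: "('p,'a) efg \<Rightarrow> 'a list \<Rightarrow> bool" where
  "nonterm_hist G h \<longleftrightarrow> h \<in> hist G \<and> (\<exists>a. h @ [a] \<in> hist G)"

definition terminals :: "('p,'a) efg \<Rightarrow> 'a list set" where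
  "terminals G = {h \<in> hist G. \<not> (\<exists>a. h @ [a] \<in> hist G)}"

definition avail :: "('p,'a) efg \<Rightarrow> 'a list set \<Rightarrow> 'a set" where
  "avail G I = {a. \<exists>h\<in>I. h @ [a] \<in> hist G}"

definition infosets :: "('p,'a) efg \<Rightarrow> 'p \<Rightarrow> 'a list set set" where
  "infosets G i = {infoset G h | h. nonterm_hist G h \<and> turn G h = i}"

definition all_infosets :: "('p,'a) efg \<Rightarrow> 'a list set set" where
  "all_infosets G = (\<Union>i\<in>agents G. infosets G i)"

definition precedes :: "'a list set \<Rightarrow> 'a list set \<Rightarrow> bool" where
  "precedes I I' \<longleftrightarrow> (\<exists>h\<in>I. \<exists>h'\<in>I'. prefix h h')"

definition strictly_precedes :: "'a list set \<Rightarrow> 'a list set \<Rightarrow> bool" where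
  "strictly_precedes I I' \<longleftrightarrow> (\<exists>h\<in>I. \<exists>h'\<in>I'. strict_prefix h h')"

definition experience :: "('p,'a) efg \<Rightarrow> 'p \<Rightarrow> 'a list \<Rightarrow> ('a list set \<times> 'a) list" where
  "experience G i h =
     map (\<lambda>k. (infoset G (take k h), h ! k)) (filter (\<lambda>k. turn G (take k h) = i) [0..<length h])"

definition perfect_recall :: "('p,'a) efg \<Rightarrow> bool" where
  "perfect_recall G \<longleftrightarrow>
     (\<forall>i\<in>players G. \<forall>h. nonterm_hist G h \<and> turn G h = i \<longrightarrow>
        (\<forall>h'\<in>infoset G h. experience G i h' = experience G i h))"

definition wf_game :: "('p,'a) efg \<Rightarrow> bool" where
  "wf_game G \<longleftrightarrow>
     finite (players G) \<and> nature G \<notin> players G \<and>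
     finite (hist G) \<and> [] \<in> hist G \<and>
     (\<forall>h\<in>hist G. \<forall>h'. prefix h' h \<longrightarrow> h' \<in> hist G) \<and>
     (\<forall>h. nonterm_hist G h \<longrightarrow>
        turn G h \<in> agents G \<and> h \<in> infoset G h \<and>
        (\<forall>h'\<in>infoset G h. nonterm_hist G h' \<and> turn G h' = turn G h \<and>
            infoset G h' = infoset G h \<and>
            {a. h' @ [a] \<in> hist G} = {a. h @ [a] \<in> hist G}) \<and>
        (turn G h = nature G \<longrightarrow> infoset G h = {h})) \<and>
     perfect_recall G \<and>
     partial_order_on (all_infosets G)
       {(I, I'). I \<in> all_infosets G \<and> I' \<in> all_infosets G \<and> precedes I I'}"

definition strategies :: "('p,'a) efg \<Rightarrow> 'p \<Rightarrow> ('p,'a) strat set" where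
  "strategies G i = (\<Pi>\<^sub>E I\<in>infosets G i. avail G I)"

definition others :: "('p,'a) efg \<Rightarrow> 'p \<Rightarrow> ('p,'a) profile set" where
  "others G i = (\<Pi>\<^sub>E j\<in>agents G - {i}. strategies G j)"

definition consistent :: "('p,'a) efg \<Rightarrow> ('p,'a) profile \<Rightarrow> 'a list \<Rightarrow> bool" where
  "consistent G s h \<longleftrightarrow>
     (\<forall>k<length h. s (turn G (take k h)) (infoset G (take k h)) = h ! k)"

definition outcome :: "('p,'a) efg \<Rightarrow> ('p,'a) profile \<Rightarrow> 'a list" where
  "outcome G s = (THE z. z \<in> terminals G \<and> consistent G s z)"

definition reaches :: "('p,'a) efg \<Rightarrow> ('p,'a) profile \<Rightarrow> 'a list set \<Rightarrow> bool" where
  "reaches G s I \<longleftrightarrow> (\<exists>h\<in>I. prefix h (outcome G s))"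

definition others_reaching :: "('p,'a) efg \<Rightarrow> 'p \<Rightarrow> 'a list set \<Rightarrow> ('p,'a) profile set" where
  "others_reaching G i I =
     {sm \<in> others G i. \<exists>si\<in>strategies G i. reaches G (sm(i := si)) I}"

definition strat_reaches :: "('p,'a) efg \<Rightarrow> 'p \<Rightarrow> ('p,'a) strat \<Rightarrow> 'a list set \<Rightarrow> bool" where
  "strat_reaches G i si I \<longleftrightarrow> (\<exists>sm\<in>others G i. reaches G (sm(i := si)) I)"

definition belief_system ::
  "('p,'a) efg \<Rightarrow> 'p \<Rightarrow> ('a list set \<Rightarrow> ('p,'a) profile pmf) \<Rightarrow> bool" where
  "belief_system G i b \<longleftrightarrow>
     (\<forall>I\<in>infosets G i.
        set_pmf (b I) \<subseteq> others G i \<and>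
        measure_pmf.prob (b I) (others_reaching G i I) = 1 \<and>
        (\<forall>I'\<in>infosets G i. precedes I I' \<and> measure_pmf.prob (b I) (others_reaching G i I') > 0 \<longrightarrow>
           (\<forall>E. measure_pmf.prob (b I') E =
                 measure_pmf.prob (b I) (E \<inter> others_reaching G i I') /
                 measure_pmf.prob (b I) (others_reaching G i I'))))"

definition full_support ::
  "('p,'a) efg \<Rightarrow> 'p \<Rightarrow> ('a list set \<Rightarrow> ('p,'a) profile pmf) \<Rightarrow> bool" where
  "full_support G i b \<longleftrightarrow>
     (\<forall>I\<in>infosets G i. \<forall>sm\<in>others_reaching G i I. pmf (b I) sm > 0)"

definition exp_util ::
  "('p,'a) efg \<Rightarrow> ('p \<Rightarrow> 'a list \<Rightarrow> real) \<Rightarrow> 'p \<Rightarrow> ('p,'a) profile pmf \<Rightarrow> ('p,'a) strat \<Rightarrow> real" where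
  "exp_util G u i \<mu> si = measure_pmf.expectation \<mu> (\<lambda>sm. u i (outcome G (sm(i := si))))"

definition replacement ::
  "('p,'a) efg \<Rightarrow> 'p \<Rightarrow> 'a list set \<Rightarrow> ('p,'a) strat \<Rightarrow> ('p,'a) strat \<Rightarrow> bool" where
  "replacement G i I si ti \<longleftrightarrow>
     ti \<in> strategies G i \<and>
     (\<forall>I'\<in>infosets G i. strictly_precedes I' I \<longrightarrow> ti I' = si I')"

definition rational_at ::
  "('p,'a) efg \<Rightarrow> ('p \<Rightarrow> 'a list \<Rightarrow> real) \<Rightarrow> 'p \<Rightarrow> 'a list set \<Rightarrow> ('p,'a) profile pmf
     \<Rightarrow> ('p,'a) strat \<Rightarrow> bool" where
  "rational_at G u i I \<mu> si \<longleftrightarrow>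
     \<not> strat_reaches G i si I \<or>
     \<not> (\<exists>ti. replacement G i I si ti \<and> exp_util G u i \<mu> ti > exp_util G u i \<mu> si)"

definition cont_rational_at ::
  "('p,'a) efg \<Rightarrow> ('p \<Rightarrow> 'a list \<Rightarrow> real) \<Rightarrow> 'p \<Rightarrow> 'a list set \<Rightarrow> ('p,'a) profile pmf
     \<Rightarrow> ('p,'a) strat \<Rightarrow> bool" where
  "cont_rational_at G u i I \<mu> si \<longleftrightarrow>
     (\<exists>ti\<in>strategies G i. strat_reaches G i ti I \<and>
        (\<forall>I'\<in>infosets G i. precedes I I' \<longrightarrow> ti I' = si I') \<and>
        rational_at G u i I \<mu> ti)"

definition strong_L1 ::
  "('p,'a) efg \<Rightarrow> ('p \<Rightarrow> 'a list \<Rightarrow> real) \<Rightarrow> ('p \<Rightarrow> 'a list set \<Rightarrow> ('p,'a) profile pmf)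
     \<Rightarrow> 'p \<Rightarrow> ('p,'a) strat set" where
  "strong_L1 G u b i =
     {si \<in> strategies G i. \<forall>I\<in>infosets G i. rational_at G u i I (b i I) si}"

definition backward_L1 ::
  "('p,'a) efg \<Rightarrow> ('p \<Rightarrow> 'a list \<Rightarrow> real) \<Rightarrow> ('p \<Rightarrow> 'a list set \<Rightarrow> ('p,'a) profile pmf)
     \<Rightarrow> 'p \<Rightarrow> ('p,'a) strat set" where
  "backward_L1 G u b i =
     {si \<in> strategies G i. \<forall>I\<in>infosets G i. cont_rational_at G u i I (b i I) si}"

definition Zof :: "('p,'a) efg \<Rightarrow> ('p \<Rightarrow> ('p,'a) strat set) \<Rightarrow> 'a list set" where
  "Zof G X = {outcome G s | s. s \<in> (\<Pi>\<^sub>E j\<in>agents G.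
                 if j = nature G then strategies G j else X j)}"

end

theory Submission
  imports Defs
begin

text \<open>
  A backward level-1 strategy is strong level-1: where it reaches an information set it
  coincides with a rational continuation, and a strategy that reaches \<open>I\<close> is rational at
  \<open>I\<close> iff it maximises expected utility at \<open>I\<close> among all strategies reaching \<open>I\<close>.
  Conversely, a strong level-1 strategy can be changed at the information sets it does not
  reach into a backward level-1 strategy without changing any outcome; the replacement
  continuations come from a backward level-1 strategy, which exists by backward induction
  over the information sets. Full support makes the beliefs at later information sets the
  conditionals of earlier ones, so improving the continuation at a later set improves
  expected utility at every earlier one.
\<close>

lemma nonterm_hist_in_hist: "nonterm_hist G h \<Longrightarrow> h \<in> hist G"
  unfolding nonterm_hist_def by blast

lemma mem_experience_iff:
  "(J, a) \<in> set (experience G i h) \<longleftrightarrow>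
     (\<exists>k<length h. turn G (take k h) = i \<and> infoset G (take k h) = J \<and> h ! k = a)"
  unfolding experience_def by auto

lemma strict_prefix_take: "k < length h \<Longrightarrow> strict_prefix (take k h) h"
  unfolding strict_prefix_def by (metis length_take min.absorb4 order_less_irrefl take_is_prefix)

lemma strict_prefix_eq_take:
  "strict_prefix h' h \<Longrightarrow> length h' < length h \<and> take (length h') h = h'"
  by (auto simp: prefix_length_less elim!: strict_prefixE')

lemma consistent_take: "consistent G s h \<Longrightarrow> consistent G s (take n h)"
  unfolding consistent_def by (auto simp: min_def)

lemma consistent_prefix: "consistent G s h \<Longrightarrow> prefix h' h \<Longrightarrow> consistent G s h'"
  unfolding prefix_def using consistent_take[of G s h "length h'"] by auto

lemma consistent_take_eq:
  assumes "consistent G s h1" "consistent G s h2" "n \<le> length h1" "n \<le> length h2"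
  shows "take n h1 = take n h2"
  using assms(3,4)
proof (induction n)
  case (Suc n)
  then have IH: "take n h1 = take n h2" by simp
  have "h1 ! n = h2 ! n"
    using assms(1,2) Suc.prems IH unfolding consistent_def by (metis Suc_le_eq)
  then show ?case using Suc.prems IH by (simp add: take_Suc_conv_app_nth)
qed simp

lemma consistent_prefix_cases:
  assumes "consistent G s h1" "consistent G s h2"
  shows "prefix h1 h2 \<or> prefix h2 h1"
  using consistent_take_eq[OF assms, of "min (length h1) (length h2)"]
  by (metis min.cobounded1 min.cobounded2 min_absorb1 min_absorb2 nle_le take_all take_is_prefix)

definition valid_profile :: "('p,'a) efg \<Rightarrow> ('p,'a) profile \<Rightarrow> bool" where
  "valid_profile G s \<longleftrightarrow> (\<forall>j\<in>agents G. s j \<in> strategies G j)"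

lemma valid_profile_upd:
  "sm \<in> others G i \<Longrightarrow> t \<in> strategies G i \<Longrightarrow> valid_profile G (sm(i := t))"
  unfolding valid_profile_def others_def by (auto simp: PiE_iff)

lemma others_reaching_subset: "others_reaching G i I \<subseteq> others G i"
  unfolding others_reaching_def by blast

lemma Zof_mono:
  assumes "\<And>j. j \<in> players G \<Longrightarrow> X j \<subseteq> Y j"
  shows "Zof G X \<subseteq> Zof G Y"
proof -
  have "(\<Pi>\<^sub>E j\<in>agents G. if j = nature G then strategies G j else X j)
      \<subseteq> (\<Pi>\<^sub>E j\<in>agents G. if j = nature G then strategies G j else Y j)"
    using assms by (intro PiE_mono) (auto simp: agents_def)
  then show ?thesis unfolding Zof_def by blast
qed

locale efg_game =
  fixes G :: "('p,'a) efg"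
  assumes wf: "wf_game G"
begin

lemma hist_prefix_closed: "h \<in> hist G \<Longrightarrow> prefix h' h \<Longrightarrow> h' \<in> hist G"
  using wf unfolding wf_game_def by blast

lemma nil_hist: "[] \<in> hist G"
  using wf unfolding wf_game_def by blast

lemma nonterm_hist_infoset:
  assumes "nonterm_hist G h"
  shows "turn G h \<in> agents G" "h \<in> infoset G h"
    "h' \<in> infoset G h \<Longrightarrow> nonterm_hist G h' \<and> turn G h' = turn G h \<and>
       infoset G h' = infoset G h \<and> {a. h' @ [a] \<in> hist G} = {a. h @ [a] \<in> hist G}"
  using wf assms unfolding wf_game_def by blast+

lemma infosetsD:
  assumes "I \<in> infosets G i" "h \<in> I"
  shows "nonterm_hist G h" "turn G h = i" "infoset G h = I"
proof -
  obtain h0 where "I = infoset G h0" "nonterm_hist G h0" "turn G h0 = i"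
    using assms(1) unfolding infosets_def by blast
  then show "nonterm_hist G h" "turn G h = i" "infoset G h = I"
    using nonterm_hist_infoset(3)[of h0 h] assms(2) by auto
qed

lemma infosets_hist: "I \<in> infosets G i \<Longrightarrow> h \<in> I \<Longrightarrow> h \<in> hist G"
  using infosetsD(1) nonterm_hist_in_hist by blast

lemma infosetsI: "nonterm_hist G h \<Longrightarrow> turn G h = i \<Longrightarrow> infoset G h \<in> infosets G i"
  unfolding infosets_def by blast

lemma infosets_nonempty: "I \<in> infosets G i \<Longrightarrow> \<exists>h. h \<in> I"
  unfolding infosets_def using nonterm_hist_infoset(2) by blast

lemma avail_nonempty: "I \<in> infosets G i \<Longrightarrow> avail G I \<noteq> {}"
  using infosets_nonempty infosetsD(1) unfolding avail_def nonterm_hist_def by blast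

lemma nonterm_hist_take:
  assumes "h \<in> hist G" "k < length h"
  shows "nonterm_hist G (take k h)"
  unfolding nonterm_hist_def
  by (metis assms hist_prefix_closed take_Suc_conv_app_nth take_is_prefix)

lemma take_mem_infoset: "h \<in> hist G \<Longrightarrow> k < length h \<Longrightarrow> take k h \<in> infoset G (take k h)"
  using nonterm_hist_take nonterm_hist_infoset(2) by blast

lemma infoset_take_mem_infosets:
  "h \<in> hist G \<Longrightarrow> k < length h \<Longrightarrow> turn G (take k h) = i \<Longrightarrow> infoset G (take k h) \<in> infosets G i"
  using nonterm_hist_take infosetsI by blast

lemma finite_hist: "finite (hist G)"
  using wf unfolding wf_game_def by blast

lemma finite_agents: "finite (agents G)"
  using wf unfolding wf_game_def agents_def by auto

lemma finite_infosets: "finite (infosets G i)"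
proof -
  have "infosets G i \<subseteq> infoset G ` hist G"
    unfolding infosets_def using nonterm_hist_in_hist by blast
  then show ?thesis using finite_hist finite_surj by blast
qed

lemma finite_avail: "finite (avail G I)"
proof -
  have "avail G I \<subseteq> last ` hist G"
    unfolding avail_def by (auto intro!: image_eqI[where x="_ @ [_]"])
  then show ?thesis using finite_hist finite_surj by blast
qed

lemma finite_strategies: "finite (strategies G i)"
  unfolding strategies_def by (intro finite_PiE finite_infosets finite_avail)

lemma finite_others_reaching: "finite (others_reaching G i I)"
proof -
  have "finite (others G i)"
    unfolding others_def by (intro finite_PiE finite_strategies) (use finite_agents in auto)
  then show ?thesis by (rule finite_subset[OF others_reaching_subset])
qed

lemma strategies_nonempty: "strategies G i \<noteq> {}"
  using avail_nonempty unfolding strategies_def by (simp add: PiE_eq_empty_iff)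

lemma fun_upd_in_strategies:
  "s \<in> strategies G i \<Longrightarrow> J \<in> infosets G i \<Longrightarrow> a \<in> avail G J \<Longrightarrow> s(J := a) \<in> strategies G i"
  unfolding strategies_def by (auto simp: PiE_iff extensional_def)

subsection \<open>Perfect recall and precedence\<close>

lemma experience_eq:
  assumes "i \<in> players G" "I \<in> infosets G i" "h \<in> I" "h' \<in> I"
  shows "experience G i h' = experience G i h"
proof -
  have "perfect_recall G" using wf unfolding wf_game_def by blast
  then have "\<forall>h. nonterm_hist G h \<and> turn G h = i \<longrightarrow>
      (\<forall>h'\<in>infoset G h. experience G i h' = experience G i h)"
    unfolding perfect_recall_def using assms(1) by (rule bspec)
  moreover have "nonterm_hist G h \<and> turn G h = i" "h' \<in> infoset G h"
    using infosetsD[OF assms(2,3)] assms(4) by auto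
  ultimately show ?thesis by blast
qed

lemma perfect_recall_visit:
  assumes "i \<in> players G" "I \<in> infosets G i" "h \<in> I" "h0 \<in> I" "k < length h0"
    "turn G (take k h0) = i"
  obtains k' where "k' < length h" "turn G (take k' h) = i"
    "infoset G (take k' h) = infoset G (take k h0)" "h ! k' = h0 ! k"
proof -
  have "(infoset G (take k h0), h0 ! k) \<in> set (experience G i h0)"
    unfolding mem_experience_iff using assms(5,6) by auto
  then have "(infoset G (take k h0), h0 ! k) \<in> set (experience G i h)"
    using experience_eq[OF assms(1,2,4,3)] by simp
  then obtain k' where "k' < length h" "turn G (take k' h) = i"
    "infoset G (take k' h) = infoset G (take k h0)" "h ! k' = h0 ! k"
    unfolding mem_experience_iff by blast
  then show ?thesis by (rule that)
qed

lemma perfect_recall_visit_prefix: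
  assumes "i \<in> players G" "I \<in> infosets G i" "J \<in> infosets G i" "h \<in> I" "h1 \<in> J" "h2 \<in> I"
    "strict_prefix h1 h2"
  obtains k where "k < length h" "infoset G (take k h) = J"
proof -
  have "length h1 < length h2" "take (length h1) h2 = h1"
    using strict_prefix_eq_take[OF assms(7)] by auto
  then show ?thesis
    using perfect_recall_visit[OF assms(1,2,4,6), of "length h1"] infosetsD[OF assms(3,5)] that
    by metis
qed

lemma infoset_no_strict_prefix:
  assumes "i \<in> players G" "I \<in> infosets G i" "h1 \<in> I" "h2 \<in> I"
  shows "\<not> strict_prefix h1 h2"
  using assms(3,4)
proof (induction "length h2" arbitrary: h1 h2 rule: less_induct)
  case less
  show ?case
  proof
    assume sp: "strict_prefix h1 h2"
    then obtain k where k: "k < length h1" "infoset G (take k h1) = I"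
      using perfect_recall_visit_prefix[OF assms(1,2,2) less.prems(1,1,2)] by blast
    have "take k h1 \<in> I"
      using take_mem_infoset[OF infosets_hist[OF assms(2) less.prems(1)] k(1)] k(2) by simp
    moreover have "length h1 < length h2" using sp strict_prefix_eq_take by blast
    ultimately show False using less.hyps less.prems(1) strict_prefix_take[OF k(1)] by blast
  qed
qed

lemma partial_order_precedes:
  "partial_order_on (all_infosets G)
     {(I, I'). I \<in> all_infosets G \<and> I' \<in> all_infosets G \<and> precedes I I'}"
  using wf unfolding wf_game_def by blast

lemma infosets_subset_all_infosets: "i \<in> agents G \<Longrightarrow> infosets G i \<subseteq> all_infosets G"
  unfolding all_infosets_def by blast

lemma precedes_trans:
  assumes "i \<in> agents G" "I \<in> infosets G i" "J \<in> infosets G i" "K \<in> infosets G i"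
    "precedes I J" "precedes J K"
  shows "precedes I K"
  using partial_order_onD(2)[OF partial_order_precedes] infosets_subset_all_infosets[OF assms(1)]
    assms(2-6)
  unfolding trans_def by blast

lemma precedes_antisym:
  assumes "i \<in> agents G" "I \<in> infosets G i" "J \<in> infosets G i" "precedes I J" "precedes J I"
  shows "I = J"
  using partial_order_onD(3)[OF partial_order_precedes] infosets_subset_all_infosets[OF assms(1)]
    assms(2-5)
  unfolding antisym_def by blast

lemma precedes_refl: "I \<in> infosets G i \<Longrightarrow> precedes I I"
  using infosets_nonempty unfolding precedes_def by blast

lemma strictly_precedes_not_precedes:
  assumes "i \<in> players G" "I \<in> infosets G i" "J \<in> infosets G i" "strictly_precedes J I"
  shows "\<not> precedes I J"
proof
  assume "precedes I J"
  moreover have "precedes J I"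
    using assms(4) unfolding strictly_precedes_def precedes_def by (meson strict_prefix_def)
  moreover have "i \<in> agents G" using assms(1) by (simp add: agents_def)
  ultimately have "I = J" using precedes_antisym[OF _ assms(2,3)] by blast
  then show False
    using infoset_no_strict_prefix[OF assms(1,2)] assms(4) unfolding strictly_precedes_def by blast
qed

lemma exists_minimal_infoset:
  assumes "i \<in> agents G" "finite F" "F \<noteq> {}" "F \<subseteq> infosets G i"
  shows "\<exists>J0\<in>F. \<forall>J\<in>F. precedes J J0 \<longrightarrow> J = J0"
  using assms(2-4)
proof (induction F rule: finite_ne_induct)
  case (insert J F)
  then obtain M where M: "M \<in> F" "\<forall>J'\<in>F. precedes J' M \<longrightarrow> J' = M"
    by blast
  show ?case
  proof (cases "precedes J M")
    case True
    have "J' = J" if J': "J' \<in> F" "precedes J' J" for J'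
    proof -
      have infs: "J' \<in> infosets G i" "J \<in> infosets G i" "M \<in> infosets G i"
        using J'(1) M(1) insert.prems by auto
      then have "J' = M" using M J' precedes_trans[OF assms(1) infs J'(2) True] by blast
      then show ?thesis using precedes_antisym[OF assms(1) infs(2,3) True] J'(2) by simp
    qed
    then show ?thesis by blast
  next
    case False
    then show ?thesis using M by blast
  qed
qed auto

lemma terminal_prefix_eq:
  assumes "z \<in> terminals G" "h \<in> hist G" "prefix z h"
  shows "h = z"
proof (rule ccontr)
  assume "h \<noteq> z"
  then obtain c t where "h = z @ c # t" using assms(3) by (metis append_Nil2 neq_Nil_conv prefixE)
  then have "z @ [c] \<in> hist G" using hist_prefix_closed[OF assms(2)] by simp
  then show False using assms(1) unfolding terminals_def by blast
qed

lemma outcome_exists: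
  assumes "valid_profile G s"
  shows "\<exists>z. z \<in> terminals G \<and> consistent G s z"
proof -
  define C where "C = {h\<in>hist G. consistent G s h}"
  have fin: "finite (length ` C)" using finite_hist unfolding C_def by simp
  have "[] \<in> C" using nil_hist unfolding C_def consistent_def by simp
  then obtain h where hC: "h \<in> C" and "length h = Max (length ` C)"
    using Max_in[OF fin] by (metis empty_iff image_iff)
  then have longest: "\<And>h'. h' \<in> C \<Longrightarrow> length h' \<le> length h" using fin by simp
  have "h \<in> terminals G"
  proof (rule ccontr)
    assume "h \<notin> terminals G"
    then have nt: "nonterm_hist G h" using hC unfolding C_def terminals_def nonterm_hist_def by blast
    define j where "j = turn G h"
    have "j \<in> agents G" "infoset G h \<in> infosets G j"
      using nonterm_hist_infoset(1)[OF nt] infosetsI[OF nt] j_def by auto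
    then have "s j (infoset G h) \<in> avail G (infoset G h)"
      using assms unfolding valid_profile_def strategies_def by (auto simp: PiE_iff)
    then obtain h' where "h' \<in> infoset G h" "h' @ [s j (infoset G h)] \<in> hist G"
      unfolding avail_def by blast
    then have "h @ [s j (infoset G h)] \<in> hist G" using nonterm_hist_infoset(3)[OF nt] by blast
    moreover have "consistent G s (h @ [s j (infoset G h)])"
      using hC unfolding C_def consistent_def j_def by (auto simp: nth_append less_Suc_eq)
    ultimately have "h @ [s j (infoset G h)] \<in> C" unfolding C_def by blast
    then show False using longest by fastforce
  qed
  then show ?thesis using hC unfolding C_def by blast
qed

lemma outcome_unique:
  assumes "z1 \<in> terminals G" "consistent G s z1" "z2 \<in> terminals G" "consistent G s z2"
  shows "z1 = z2"
  using consistent_prefix_cases[OF assms(2,4)] terminal_prefix_eq assms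
  unfolding terminals_def by blast

lemma outcome_in_terminals: "valid_profile G s \<Longrightarrow> outcome G s \<in> terminals G"
  and consistent_outcome: "valid_profile G s \<Longrightarrow> consistent G s (outcome G s)"
proof -
  assume "valid_profile G s"
  then have "\<exists>!z. z \<in> terminals G \<and> consistent G s z"
    using outcome_exists outcome_unique by blast
  then have "outcome G s \<in> terminals G \<and> consistent G s (outcome G s)"
    unfolding outcome_def by (rule theI')
  then show "outcome G s \<in> terminals G" "consistent G s (outcome G s)" by auto
qed

lemma outcome_hist: "valid_profile G s \<Longrightarrow> outcome G s \<in> hist G"
  using outcome_in_terminals unfolding terminals_def by blast

lemma prefix_outcome_if_consistent:
  assumes "valid_profile G s" "h \<in> hist G" "consistent G s h"
  shows "prefix h (outcome G s)"
  using consistent_prefix_cases[OF assms(3) consistent_outcome[OF assms(1)]]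
    terminal_prefix_eq[OF outcome_in_terminals[OF assms(1)] assms(2)] by auto

lemma reaches_take_outcome:
  "valid_profile G s \<Longrightarrow> k < length (outcome G s) \<Longrightarrow>
     reaches G s (infoset G (take k (outcome G s)))"
  unfolding reaches_def using take_mem_infoset outcome_hist take_is_prefix by blast

lemma outcome_cong_reached:
  assumes "valid_profile G s" "valid_profile G s'"
    and agree: "\<And>j I. j \<in> agents G \<Longrightarrow> I \<in> infosets G j \<Longrightarrow> reaches G s I \<Longrightarrow> s' j I = s j I"
  shows "outcome G s' = outcome G s"
proof -
  define z where "z = outcome G s"
  have "s' (turn G (take k z)) (infoset G (take k z)) = s (turn G (take k z)) (infoset G (take k z))"
    if k: "k < length z" for k
  proof -
    have "z \<in> hist G" using outcome_hist[OF assms(1)] z_def by simp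
    then have "turn G (take k z) \<in> agents G"
      "infoset G (take k z) \<in> infosets G (turn G (take k z))"
      using nonterm_hist_take[OF _ k] nonterm_hist_infoset(1) infoset_take_mem_infosets k by blast+
    then show ?thesis using agree reaches_take_outcome[OF assms(1)] k z_def by blast
  qed
  then have "consistent G s' z"
    using consistent_outcome[OF assms(1)] unfolding consistent_def z_def by simp
  then show ?thesis
    using outcome_unique[OF outcome_in_terminals[OF assms(2)] consistent_outcome[OF assms(2)]]
      outcome_in_terminals[OF assms(1)] z_def by blast
qed

lemma outcome_upd_cong:
  assumes "sm \<in> others G i" "t \<in> strategies G i" "t' \<in> strategies G i"
    and "\<And>I. I \<in> infosets G i \<Longrightarrow> reaches G (sm(i := t)) I \<Longrightarrow> t' I = t I"
  shows "outcome G (sm(i := t')) = outcome G (sm(i := t))"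
  using assms by (intro outcome_cong_reached valid_profile_upd) auto

lemma strat_reaches_if_reaches:
  assumes "s \<in> (\<Pi>\<^sub>E j\<in>agents G. strategies G j)" "j \<in> agents G" "reaches G s I"
  shows "strat_reaches G j (s j) I"
proof -
  have "s(j := undefined) \<in> others G j"
    using assms(1,2) unfolding others_def by (auto simp: PiE_iff extensional_def)
  moreover have "(s(j := undefined))(j := s j) = s" by simp
  ultimately show ?thesis using assms(3) unfolding strat_reaches_def by metis
qed

lemma Zof_subset_if_agree_on_reached:
  assumes XS: "\<And>j. j \<in> players G \<Longrightarrow> X j \<subseteq> strategies G j"
    and YS: "\<And>j. j \<in> players G \<Longrightarrow> Y j \<subseteq> strategies G j"
    and XY: "\<And>j sj. j \<in> players G \<Longrightarrow> sj \<in> X j \<Longrightarrow>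
       \<exists>sj'\<in>Y j. \<forall>I\<in>infosets G j. strat_reaches G j sj I \<longrightarrow> sj' I = sj I"
  shows "Zof G X \<subseteq> Zof G Y"
proof
  fix z assume "z \<in> Zof G X"
  then obtain s where z: "z = outcome G s"
    and s: "s \<in> (\<Pi>\<^sub>E j\<in>agents G. if j = nature G then strategies G j else X j)"
    unfolding Zof_def by blast
  have nature: "nature G \<notin> players G" using wf unfolding wf_game_def by blast
  obtain f where f: "\<And>j sj. j \<in> players G \<Longrightarrow> sj \<in> X j \<Longrightarrow>
      f j sj \<in> Y j \<and> (\<forall>I\<in>infosets G j. strat_reaches G j sj I \<longrightarrow> f j sj I = sj I)"
    using XY by metis
  define s' where "s' j = (if j \<in> players G then f j (s j) else s j)" for j
  have sX: "s j \<in> X j" if "j \<in> players G" for j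
  proof -
    have "s j \<in> (if j = nature G then strategies G j else X j)"
      using s that unfolding agents_def by blast
    then show ?thesis using that nature by (auto split: if_splits)
  qed
  have s': "s' \<in> (\<Pi>\<^sub>E j\<in>agents G. if j = nature G then strategies G j else Y j)"
    using s f[OF _ sX] nature unfolding s'_def by (auto simp: PiE_iff agents_def extensional_def)
  have "s (nature G) \<in> strategies G (nature G)" using s by (auto simp: PiE_iff agents_def)
  then have sS: "s \<in> (\<Pi>\<^sub>E j\<in>agents G. strategies G j)"
    using s sX XS by (auto simp: PiE_iff agents_def)
  have valid: "valid_profile G s" "valid_profile G s'"
    using sS f[OF _ sX] YS unfolding valid_profile_def s'_def by (auto simp: PiE_iff agents_def)
  have "outcome G s' = outcome G s"
  proof (rule outcome_cong_reached[OF valid])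
    fix j I assume "j \<in> agents G" "I \<in> infosets G j" "reaches G s I"
    then show "s' j I = s j I"
      using f[OF _ sX] strat_reaches_if_reaches[OF sS] unfolding s'_def by auto
  qed
  then have "z = outcome G s'" using z by simp
  then show "z \<in> Zof G Y" using s' unfolding Zof_def by blast
qed

lemma strat_reaches_action:
  assumes "i \<in> players G" "I \<in> infosets G i" "t \<in> strategies G i" "strat_reaches G i t I"
    "h \<in> I" "k < length h" "turn G (take k h) = i"
  shows "t (infoset G (take k h)) = h ! k"
proof -
  obtain sm h' where sm: "sm \<in> others G i" "h' \<in> I" "prefix h' (outcome G (sm(i := t)))"
    using assms(4) unfolding strat_reaches_def reaches_def by blast
  obtain k' where k': "k' < length h'" "turn G (take k' h') = i"
     "infoset G (take k' h') = infoset G (take k h)" "h' ! k' = h ! k"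
    using perfect_recall_visit[OF assms(1,2) sm(2) assms(5,6,7)] by blast
  have "consistent G (sm(i := t)) h'"
    using consistent_prefix[OF consistent_outcome[OF valid_profile_upd[OF sm(1) assms(3)]] sm(3)] .
  then show ?thesis using k' unfolding consistent_def by force
qed

lemma reaches_upd_cong_along:
  assumes "sm \<in> others G i" "t \<in> strategies G i" "t' \<in> strategies G i"
    "h \<in> I" "h \<in> hist G" "prefix h (outcome G (sm(i := t)))"
    "\<And>k. k < length h \<Longrightarrow> turn G (take k h) = i \<Longrightarrow>
        t' (infoset G (take k h)) = t (infoset G (take k h))"
  shows "reaches G (sm(i := t')) I"
proof -
  have "consistent G (sm(i := t)) h"
    using consistent_prefix[OF consistent_outcome[OF valid_profile_upd[OF assms(1,2)]] assms(6)] .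
  then have "consistent G (sm(i := t')) h"
    using assms(7) unfolding consistent_def by (metis fun_upd_apply)
  then show ?thesis
    using prefix_outcome_if_consistent[OF valid_profile_upd[OF assms(1,3)] assms(5)] assms(4)
    unfolding reaches_def by blast
qed

lemma reaches_upd_cong_before:
  assumes "I \<in> infosets G i" "sm \<in> others G i" "t \<in> strategies G i" "t' \<in> strategies G i"
    "reaches G (sm(i := t)) I"
    "\<And>J. J \<in> infosets G i \<Longrightarrow> strictly_precedes J I \<Longrightarrow> t' J = t J"
  shows "reaches G (sm(i := t')) I"
proof -
  obtain h where h: "h \<in> I" "prefix h (outcome G (sm(i := t)))"
    using assms(5) unfolding reaches_def by blast
  have hh: "h \<in> hist G" using infosets_hist[OF assms(1) h(1)] .
  show ?thesis
  proof (rule reaches_upd_cong_along[OF assms(2,3,4) h(1) hh h(2)])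
    fix k assume k: "k < length h" "turn G (take k h) = i"
    have "strictly_precedes (infoset G (take k h)) I"
      unfolding strictly_precedes_def
      using take_mem_infoset[OF hh k(1)] h(1) strict_prefix_take[OF k(1)] by blast
    then show "t' (infoset G (take k h)) = t (infoset G (take k h))"
      using assms(6) infoset_take_mem_infosets[OF hh k] by blast
  qed
qed

lemma strat_reaches_cong_before:
  assumes "I \<in> infosets G i" "t \<in> strategies G i" "t' \<in> strategies G i"
    "strat_reaches G i t I"
    "\<And>J. J \<in> infosets G i \<Longrightarrow> strictly_precedes J I \<Longrightarrow> t' J = t J"
  shows "strat_reaches G i t' I"
  using reaches_upd_cong_before[OF assms(1) _ assms(2,3) _ assms(5)] assms(4)
  unfolding strat_reaches_def by blast

lemma reaches_upd_if_others_reaching: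
  assumes "i \<in> players G" "I \<in> infosets G i" "t \<in> strategies G i" "strat_reaches G i t I"
    "sm \<in> others_reaching G i I"
  shows "reaches G (sm(i := t)) I"
proof -
  obtain si where si: "sm \<in> others G i" "si \<in> strategies G i" "reaches G (sm(i := si)) I"
    using assms(5) unfolding others_reaching_def by blast
  obtain h where h: "h \<in> I" "prefix h (outcome G (sm(i := si)))"
    using si(3) unfolding reaches_def by blast
  have cons: "consistent G (sm(i := si)) h"
    using consistent_prefix[OF consistent_outcome[OF valid_profile_upd[OF si(1,2)]] h(2)] .
  show ?thesis
  proof (rule reaches_upd_cong_along[OF si(1,2) assms(3) h(1) infosets_hist[OF assms(2) h(1)] h(2)])
    fix k assume k: "k < length h" "turn G (take k h) = i"
    then have "si (infoset G (take k h)) = h ! k" using cons unfolding consistent_def by force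
    then show "t (infoset G (take k h)) = si (infoset G (take k h))"
      using strat_reaches_action[OF assms(1-4) h(1) k] by simp
  qed
qed

lemma reaches_precedes:
  assumes "i \<in> players G" "valid_profile G s" "reaches G s J'" "J \<in> infosets G i"
    "J' \<in> infosets G i" "precedes J J'"
  shows "reaches G s J"
proof -
  obtain h where h: "h \<in> J'" "prefix h (outcome G s)"
    using assms(3) unfolding reaches_def by blast
  obtain h1 h2 where h12: "h1 \<in> J" "h2 \<in> J'" "prefix h1 h2"
    using assms(6) unfolding precedes_def by blast
  show ?thesis
  proof (cases "h1 = h2")
    case True
    then have "J = J'" using infosetsD(3)[OF assms(4) h12(1)] infosetsD(3)[OF assms(5) h12(2)]
      by blast
    then show ?thesis using assms(3) by simp
  next
    case False
    then have "strict_prefix h1 h2" using h12(3) by (simp add: strict_prefix_def)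
    then obtain k where k: "k < length h" "infoset G (take k h) = J"
      using perfect_recall_visit_prefix[OF assms(1,5,4) h(1) h12(1,2)] by blast
    have "take k h \<in> J" using take_mem_infoset[OF infosets_hist[OF assms(5) h(1)] k(1)] k(2) by simp
    moreover have "prefix (take k h) (outcome G s)" using h(2) take_is_prefix prefix_order.trans by blast
    ultimately show ?thesis unfolding reaches_def by blast
  qed
qed

lemma others_reaching_antimono:
  assumes "i \<in> players G" "I \<in> infosets G i" "J \<in> infosets G i" "precedes I J"
  shows "others_reaching G i J \<subseteq> others_reaching G i I"
  using reaches_precedes[OF assms(1) valid_profile_upd _ assms(2,3,4)]
  unfolding others_reaching_def by blast

lemma outcome_upd_cong_not_reaches:
  assumes "i \<in> players G" "J \<in> infosets G i" "sm \<in> others G i"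
    "t \<in> strategies G i" "t' \<in> strategies G i" "\<not> reaches G (sm(i := t)) J"
    "\<And>I. I \<in> infosets G i \<Longrightarrow> \<not> precedes J I \<Longrightarrow> t' I = t I"
  shows "outcome G (sm(i := t')) = outcome G (sm(i := t))"
  using assms reaches_precedes[OF assms(1) valid_profile_upd[OF assms(3,4)] _ assms(2)]
  by (intro outcome_upd_cong) blast+

definition splice :: "'p \<Rightarrow> 'a list set \<Rightarrow> ('p,'a) strat \<Rightarrow> ('p,'a) strat \<Rightarrow> ('p,'a) strat" where
  "splice i J s t = (\<lambda>I. if I \<in> infosets G i \<and> precedes J I then s I else t I)"

lemma splice_in_strategies:
  "s \<in> strategies G i \<Longrightarrow> t \<in> strategies G i \<Longrightarrow> splice i J s t \<in> strategies G i"
  unfolding strategies_def splice_def by (auto simp: PiE_iff extensional_def)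

lemma strat_reaches_splice:
  assumes "i \<in> players G" "J \<in> infosets G i" "s \<in> strategies G i" "t \<in> strategies G i"
    "strat_reaches G i t J"
  shows "strat_reaches G i (splice i J s t) J"
  using strat_reaches_cong_before[OF assms(2,4) splice_in_strategies[OF assms(3,4)] assms(5)]
    strictly_precedes_not_precedes[OF assms(1,2)] unfolding splice_def by auto

definition patch_unreached ::
  "'p \<Rightarrow> ('p,'a) strat \<Rightarrow> ('p,'a) strat \<Rightarrow> ('p,'a) strat" where
  "patch_unreached i s c = (\<lambda>I. if I \<in> infosets G i \<and> strat_reaches G i s I then s I else c I)"

lemma patch_unreached_in_strategies:
  "s \<in> strategies G i \<Longrightarrow> c \<in> strategies G i \<Longrightarrow> patch_unreached i s c \<in> strategies G i"
  unfolding strategies_def patch_unreached_def by (auto simp: PiE_iff extensional_def)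

lemma outcome_upd_patch_unreached:
  assumes "sm \<in> others G i" "s \<in> strategies G i" "c \<in> strategies G i"
  shows "outcome G (sm(i := patch_unreached i s c)) = outcome G (sm(i := s))"
  using assms by (intro outcome_upd_cong patch_unreached_in_strategies)
    (auto simp: patch_unreached_def strat_reaches_def)

lemma strat_reaches_patch_unreached_iff:
  assumes "s \<in> strategies G i" "c \<in> strategies G i"
  shows "strat_reaches G i (patch_unreached i s c) I \<longleftrightarrow> strat_reaches G i s I"
  using outcome_upd_patch_unreached[OF _ assms] unfolding strat_reaches_def reaches_def by auto

end

locale level1_game = efg_game G for G :: "('p,'a) efg" +
  fixes u :: "'p \<Rightarrow> 'a list \<Rightarrow> real"
    and b :: "'p \<Rightarrow> 'a list set \<Rightarrow> ('p,'a) profile pmf"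
  assumes beliefs: "\<forall>i\<in>players G. belief_system G i (b i) \<and> full_support G i (b i)"
begin

subsection \<open>Expected utility at an information set\<close>

abbreviation EU :: "'p \<Rightarrow> 'a list set \<Rightarrow> ('p,'a) strat \<Rightarrow> real" where
  "EU i I t \<equiv> exp_util G u i (b i I) t"

lemma belief_system: "i \<in> players G \<Longrightarrow> belief_system G i (b i)"
  and full_support: "i \<in> players G \<Longrightarrow> full_support G i (b i)"
  using beliefs by blast+

lemma prob_others_reaching:
  "i \<in> players G \<Longrightarrow> I \<in> infosets G i \<Longrightarrow> measure_pmf.prob (b i I) (others_reaching G i I) = 1"
  using belief_system unfolding belief_system_def by blast

lemma set_pmf_belief:
  assumes "i \<in> players G" "I \<in> infosets G i"
  shows "set_pmf (b i I) \<subseteq> others_reaching G i I"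
proof -
  have "AE x in measure_pmf (b i I). x \<in> others_reaching G i I"
    using prob_others_reaching[OF assms] by (subst (asm) measure_pmf.prob_eq_1) auto
  then show ?thesis by (auto simp: AE_measure_pmf_iff)
qed

lemma exists_strat_reaches:
  assumes "i \<in> players G" "I \<in> infosets G i"
  obtains t where "t \<in> strategies G i" "strat_reaches G i t I"
proof -
  have "others_reaching G i I \<noteq> {}" using prob_others_reaching[OF assms] by auto
  then show ?thesis using that unfolding others_reaching_def strat_reaches_def by blast
qed

lemma EU_eq_sum:
  assumes "i \<in> players G" "I \<in> infosets G i"
  shows "EU i I t = (\<Sum>sm\<in>others_reaching G i I. pmf (b i I) sm * u i (outcome G (sm(i := t))))"
  unfolding exp_util_def
  by (subst integral_measure_pmf_real[OF finite_others_reaching])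
     (use set_pmf_belief[OF assms] in \<open>auto simp: mult.commute\<close>)

lemma EU_cong_outcomes:
  assumes "i \<in> players G" "I \<in> infosets G i"
    "\<And>sm. sm \<in> others_reaching G i I \<Longrightarrow> outcome G (sm(i := t')) = outcome G (sm(i := t))"
  shows "EU i I t' = EU i I t"
  using assms(3) by (simp add: EU_eq_sum[OF assms(1,2)])

lemma EU_cong_from:
  assumes i: "i \<in> players G" and I: "I \<in> infosets G i"
    and t: "t \<in> strategies G i" "t' \<in> strategies G i"
    and reach: "strat_reaches G i t I" "strat_reaches G i t' I"
    and agree: "\<And>J. J \<in> infosets G i \<Longrightarrow> precedes I J \<Longrightarrow> t' J = t J"
  shows "EU i I t' = EU i I t"
proof (rule EU_cong_outcomes[OF i I])
  fix sm assume sm: "sm \<in> others_reaching G i I"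
  then have smo: "sm \<in> others G i" by (rule subsetD[OF others_reaching_subset])
  obtain h where h: "h \<in> I" "prefix h (outcome G (sm(i := t)))"
    using reaches_upd_if_others_reaching[OF i I t(1) reach(1) sm] unfolding reaches_def by blast
  show "outcome G (sm(i := t')) = outcome G (sm(i := t))"
  proof (rule outcome_upd_cong[OF smo t])
    fix J assume J: "J \<in> infosets G i" "reaches G (sm(i := t)) J"
    then obtain h' where h': "h' \<in> J" "prefix h' (outcome G (sm(i := t)))"
      unfolding reaches_def by blast
    show "t' J = t J"
    proof (cases "prefix h h'")
      case True
      then have "precedes I J" using h(1) h'(1) unfolding precedes_def by blast
      then show ?thesis using agree J(1) by blast
    next
      case False
      then have "strict_prefix h' h" using h(2) h'(2) prefix_same_cases strict_prefix_def by blast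
      then have "take (length h') h = h'" "length h' < length h"
        using strict_prefix_eq_take by blast+
      then show ?thesis
        using strat_reaches_action[OF i I t(1) reach(1) h(1)] strat_reaches_action[OF i I t(2) reach(2) h(1)]
          infosetsD(2,3)[OF J(1) h'(1)] by metis
    qed
  qed
qed

lemma EU_diff_conditional:
  assumes i: "i \<in> players G" and I: "I \<in> infosets G i" and J: "J \<in> infosets G i"
    and IJ: "precedes I J" and t: "t \<in> strategies G i" "t' \<in> strategies G i"
    and agree: "\<And>I'. I' \<in> infosets G i \<Longrightarrow> \<not> precedes J I' \<Longrightarrow> t' I' = t I'"
  shows "EU i I t' - EU i I t
    = measure_pmf.prob (b i I) (others_reaching G i J) * (EU i J t' - EU i J t)"
proof -
  define SI where "SI = others_reaching G i I"
  define SJ where "SJ = others_reaching G i J"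
  define P where "P = measure_pmf.prob (b i I) SJ"
  define d where "d sm = u i (outcome G (sm(i := t'))) - u i (outcome G (sm(i := t)))" for sm
  have sub: "SJ \<subseteq> SI" using others_reaching_antimono[OF i I J IJ] SI_def SJ_def by simp
  have fin: "finite SJ" "finite SI" using finite_others_reaching SJ_def SI_def by auto
  have "SJ \<noteq> {}" using prob_others_reaching[OF i J] SJ_def by auto
  moreover have "\<And>sm. sm \<in> SI \<Longrightarrow> pmf (b i I) sm > 0"
    using full_support[OF i] I unfolding full_support_def SI_def by blast
  ultimately have "P > 0"
    unfolding P_def using sub fin by (subst measure_measure_pmf_finite[OF fin(1)]) (intro sum_pos; auto)
  then have "measure_pmf.prob (b i J) E = measure_pmf.prob (b i I) (E \<inter> SJ) / P" for E
    using belief_system[OF i] I J IJ unfolding belief_system_def SJ_def P_def by blast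
  then have pmf_J: "pmf (b i J) sm = pmf (b i I) sm / P" if "sm \<in> SJ" for sm
    using that by (metis Int_absorb2 empty_subsetI insert_subset measure_pmf_single)
  have d0: "d sm = 0" if "sm \<in> SI - SJ" for sm
  proof -
    have smo: "sm \<in> others G i" using that unfolding SI_def by (auto intro: subsetD[OF others_reaching_subset])
    then have "\<not> reaches G (sm(i := t)) J"
      using that t(1) unfolding SJ_def others_reaching_def by blast
    then show ?thesis unfolding d_def
      using outcome_upd_cong_not_reaches[OF i J smo t _ agree] by simp
  qed
  have "EU i I t' - EU i I t = (\<Sum>sm\<in>SI. pmf (b i I) sm * d sm)"
    unfolding EU_eq_sum[OF i I] SI_def[symmetric] d_def by (simp add: sum_subtractf right_diff_distrib)
  also have "\<dots> = (\<Sum>sm\<in>SJ. pmf (b i I) sm * d sm)"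
    using d0 sub fin by (intro sum.mono_neutral_right) auto
  also have "\<dots> = P * (\<Sum>sm\<in>SJ. pmf (b i J) sm * d sm)"
    using \<open>P > 0\<close> pmf_J by (simp add: sum_distrib_left)
  also have "(\<Sum>sm\<in>SJ. pmf (b i J) sm * d sm) = EU i J t' - EU i J t"
    unfolding EU_eq_sum[OF i J] SJ_def[symmetric] d_def by (simp add: sum_subtractf right_diff_distrib)
  finally show ?thesis unfolding P_def SJ_def .
qed

lemma rational_at_iff_EU_max:
  assumes i: "i \<in> players G" and I: "I \<in> infosets G i"
    and s: "s \<in> strategies G i" "strat_reaches G i s I"
  shows "rational_at G u i I (b i I) s \<longleftrightarrow>
    (\<forall>r\<in>strategies G i. strat_reaches G i r I \<longrightarrow> EU i I r \<le> EU i I s)"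
proof
  assume rat: "rational_at G u i I (b i I) s"
  show "\<forall>r\<in>strategies G i. strat_reaches G i r I \<longrightarrow> EU i I r \<le> EU i I s"
  proof (intro ballI impI)
    fix r assume r: "r \<in> strategies G i" "strat_reaches G i r I"
    define r' where "r' = splice i I r s"
    have r': "r' \<in> strategies G i" "strat_reaches G i r' I"
      unfolding r'_def using splice_in_strategies[OF r(1) s(1)] strat_reaches_splice[OF i I r(1) s] by auto
    have "replacement G i I s r'"
      using r'(1) strictly_precedes_not_precedes[OF i I]
      unfolding replacement_def r'_def splice_def by auto
    then have "EU i I r' \<le> EU i I s" using rat s(2) unfolding rational_at_def by auto
    moreover have "EU i I r' = EU i I r"
      by (rule EU_cong_from[OF i I r(1) r'(1) r(2) r'(2)]) (simp add: r'_def splice_def)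
    ultimately show "EU i I r \<le> EU i I s" by simp
  qed
next
  assume max: "\<forall>r\<in>strategies G i. strat_reaches G i r I \<longrightarrow> EU i I r \<le> EU i I s"
  have "EU i I r \<le> EU i I s" if "replacement G i I s r" for r
    using max strat_reaches_cong_before[OF I s(1) _ s(2)] that unfolding replacement_def by auto
  then show "rational_at G u i I (b i I) s" unfolding rational_at_def by (auto simp: not_less)
qed

lemma cont_rational_at_iff_rational_at:
  assumes i: "i \<in> players G" and I: "I \<in> infosets G i"
    and s: "s \<in> strategies G i" "strat_reaches G i s I"
  shows "cont_rational_at G u i I (b i I) s \<longleftrightarrow> rational_at G u i I (b i I) s"
proof
  assume "cont_rational_at G u i I (b i I) s"
  then obtain t where t: "t \<in> strategies G i" "strat_reaches G i t I"
    "\<forall>J\<in>infosets G i. precedes I J \<longrightarrow> t J = s J" "rational_at G u i I (b i I) t"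
    unfolding cont_rational_at_def by blast
  have "EU i I s = EU i I t" using EU_cong_from[OF i I t(1) s(1) t(2) s(2)] t(3) by auto
  then show "rational_at G u i I (b i I) s"
    using t(4) unfolding rational_at_iff_EU_max[OF i I s] rational_at_iff_EU_max[OF i I t(1,2)]
    by simp
qed (use s in \<open>auto simp: cont_rational_at_def\<close>)

lemma backward_L1_subset_strong_L1:
  assumes "i \<in> players G"
  shows "backward_L1 G u b i \<subseteq> strong_L1 G u b i"
  using cont_rational_at_iff_rational_at[OF assms] unfolding backward_L1_def strong_L1_def
  by (auto simp: rational_at_def)

lemma patch_unreached_in_backward_L1:
  assumes i: "i \<in> players G" and s: "s \<in> strong_L1 G u b i" and c: "c \<in> backward_L1 G u b i"
  shows "patch_unreached i s c \<in> backward_L1 G u b i"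
proof -
  define p where "p = patch_unreached i s c"
  have ss: "s \<in> strategies G i" using s unfolding strong_L1_def by blast
  have cs: "c \<in> strategies G i" using c unfolding backward_L1_def by blast
  have ps: "p \<in> strategies G i" using patch_unreached_in_strategies[OF ss cs] p_def by simp
  have "cont_rational_at G u i I (b i I) p" if I: "I \<in> infosets G i" for I
  proof (cases "strat_reaches G i s I")
    case True
    then have pr: "strat_reaches G i p I"
      using strat_reaches_patch_unreached_iff[OF ss cs] p_def by simp
    have "EU i I p = EU i I s"
      unfolding p_def
      by (rule EU_cong_outcomes[OF i I outcome_upd_patch_unreached[OF _ ss cs]])
        (rule subsetD[OF others_reaching_subset])
    moreover have "rational_at G u i I (b i I) s" using s I unfolding strong_L1_def by blast
    ultimately have "rational_at G u i I (b i I) p"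
      using rational_at_iff_EU_max[OF i I ss True] rational_at_iff_EU_max[OF i I ps pr] by simp
    then show ?thesis using cont_rational_at_iff_rational_at[OF i I ps pr] by simp
  next
    case False
    have "p J = c J" if J: "J \<in> infosets G i" "precedes I J" for J
    proof -
      have "\<not> strat_reaches G i s J"
        using False reaches_precedes[OF i valid_profile_upd[OF _ ss] _ I J(1,2)]
        unfolding strat_reaches_def by blast
      then show ?thesis unfolding p_def patch_unreached_def by simp
    qed
    moreover obtain t where "t \<in> strategies G i" "strat_reaches G i t I"
      "\<forall>J\<in>infosets G i. precedes I J \<longrightarrow> t J = c J" "rational_at G u i I (b i I) t"
      using c I unfolding backward_L1_def cont_rational_at_def by blast
    ultimately show ?thesis unfolding cont_rational_at_def by auto
  qed
  then show ?thesis using ps unfolding backward_L1_def p_def by blast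
qed

subsection \<open>Existence of backward level-1 strategies\<close>

definition optimal_from :: "'p \<Rightarrow> 'a list set \<Rightarrow> ('p,'a) strat \<Rightarrow> bool" where
  "optimal_from i J s \<longleftrightarrow> (\<forall>t\<in>strategies G i. EU i J t \<le> EU i J (splice i J s t))"

lemma optimal_from_cong:
  assumes "\<And>I. I \<in> infosets G i \<Longrightarrow> precedes J I \<Longrightarrow> s' I = s I"
  shows "optimal_from i J s' \<longleftrightarrow> optimal_from i J s"
proof -
  have "splice i J s' = splice i J s" using assms unfolding splice_def by fastforce
  then show ?thesis unfolding optimal_from_def by simp
qed

lemma EU_splice_if_not_strat_reaches:
  assumes "i \<in> players G" "J \<in> infosets G i" "s \<in> strategies G i" "t \<in> strategies G i"
    "\<not> strat_reaches G i t J"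
  shows "EU i J (splice i J s t) = EU i J t"
proof (rule EU_cong_outcomes[OF assms(1,2)])
  fix sm assume "sm \<in> others_reaching G i J"
  then have smo: "sm \<in> others G i" by (rule subsetD[OF others_reaching_subset])
  then have "\<not> reaches G (sm(i := t)) J" using assms(5) unfolding strat_reaches_def by blast
  then show "outcome G (sm(i := splice i J s t)) = outcome G (sm(i := t))"
    using outcome_upd_cong_not_reaches[OF assms(1,2) smo assms(4) splice_in_strategies[OF assms(3,4)]]
    unfolding splice_def by auto
qed

text \<open>Switching \<open>t\<close> to \<open>s\<close> one later information set \<open>J1\<close> at a time never lowers the
  expected utility at \<open>J0\<close>: by \<open>EU_diff_conditional\<close> each switch changes it by a nonnegative
  multiple of the gain at \<open>J1\<close>, which is nonnegative by optimality of \<open>s\<close> from \<open>J1\<close>.\<close>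

lemma EU_le_follow_after:
  assumes i: "i \<in> players G" and J0: "J0 \<in> infosets G i" and s: "s \<in> strategies G i"
    and opt: "\<And>J. J \<in> infosets G i \<Longrightarrow> precedes J0 J \<Longrightarrow> J \<noteq> J0 \<Longrightarrow> optimal_from i J s"
    and t: "t \<in> strategies G i"
  shows "EU i J0 t \<le> EU i J0 (splice i J0 (s(J0 := t J0)) t)"
proof -
  define D where "D t = {J \<in> infosets G i. precedes J0 J \<and> J \<noteq> J0 \<and> t J \<noteq> s J}" for t
  have ia: "i \<in> agents G" using i by (simp add: agents_def)
  show ?thesis using t
  proof (induction "card (D t)" arbitrary: t rule: less_induct)
    case less
    show ?case
    proof (cases "D t = {}")
      case True
      then have "splice i J0 (s(J0 := t J0)) t = t" unfolding D_def splice_def by fastforce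
      then show ?thesis by simp
    next
      case False
      then obtain J1 where J1: "J1 \<in> infosets G i" "precedes J0 J1" "J1 \<noteq> J0" "t J1 \<noteq> s J1"
        unfolding D_def by blast
      define t' where "t' = splice i J1 s t"
      have t': "t' \<in> strategies G i" using splice_in_strategies[OF s less.prems] t'_def by simp
      have agree: "\<And>J. J \<in> infosets G i \<Longrightarrow> \<not> precedes J1 J \<Longrightarrow> t' J = t J"
        unfolding t'_def splice_def by auto
      have "EU i J1 t \<le> EU i J1 t'"
        using opt[OF J1(1-3)] less.prems unfolding optimal_from_def t'_def by blast
      then have "EU i J0 t \<le> EU i J0 t'"
        using EU_diff_conditional[OF i J0 J1(1,2) less.prems t' agree]
        by (smt (verit) measure_nonneg mult_nonneg_nonneg)
      also have "\<dots> \<le> EU i J0 (splice i J0 (s(J0 := t' J0)) t')"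
      proof (rule less.hyps[OF _ t'])
        have "D t' \<subseteq> D t - {J1}"
          using agree precedes_refl[OF J1(1)] unfolding D_def t'_def splice_def by auto
        moreover have "J1 \<in> D t" using J1 unfolding D_def by blast
        ultimately have "D t' \<subset> D t" by blast
        moreover have "finite (D t)" using finite_infosets unfolding D_def by simp
        ultimately show "card (D t') < card (D t)" by (simp add: psubset_card_mono)
      qed
      also have "splice i J0 (s(J0 := t' J0)) t' = splice i J0 (s(J0 := t J0)) t"
      proof -
        have "t' J = t J" if "\<not> (J \<in> infosets G i \<and> precedes J0 J)" for J
          using that precedes_trans[OF ia J0 J1(1) _ J1(2)] unfolding t'_def splice_def by auto
        moreover have "t' J0 = t J0"
          using agree[OF J0] precedes_antisym[OF ia J0 J1(1,2)] J1(3) by blast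
        ultimately show ?thesis unfolding splice_def by auto
      qed
      finally show ?thesis .
    qed
  qed
qed

lemma optimal_from_upd_argmax:
  assumes i: "i \<in> players G" and J0: "J0 \<in> infosets G i" and s: "s \<in> strategies G i"
    and opt: "\<And>J. J \<in> infosets G i \<Longrightarrow> precedes J0 J \<Longrightarrow> J \<noteq> J0 \<Longrightarrow> optimal_from i J s"
    and t0: "t0 \<in> strategies G i" "strat_reaches G i t0 J0"
    and a: "a \<in> avail G J0"
    and argmax: "\<And>c. c \<in> avail G J0 \<Longrightarrow>
        EU i J0 (splice i J0 (s(J0 := c)) t0) \<le> EU i J0 (splice i J0 (s(J0 := a)) t0)"
  shows "optimal_from i J0 (s(J0 := a))"
  unfolding optimal_from_def
proof
  fix t assume t: "t \<in> strategies G i"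
  define sa where "sa = s(J0 := a)"
  define st where "st = s(J0 := t J0)"
  have "t J0 \<in> avail G J0" using t J0 unfolding strategies_def by auto
  then have sa: "sa \<in> strategies G i" and st: "st \<in> strategies G i"
    using fun_upd_in_strategies[OF s J0] a unfolding sa_def st_def by auto
  show "EU i J0 t \<le> EU i J0 (splice i J0 sa t)"
  proof (cases "strat_reaches G i t J0")
    case True
    note cong = EU_cong_from[OF i J0 splice_in_strategies splice_in_strategies
        strat_reaches_splice[OF i J0] strat_reaches_splice[OF i J0]]
    have "EU i J0 t \<le> EU i J0 (splice i J0 st t)"
      using EU_le_follow_after[OF i J0 s opt t] unfolding st_def .
    also have "\<dots> = EU i J0 (splice i J0 st t0)"
      by (rule cong[OF st t0(1) st t st t0(1,2) st t True]) (simp add: splice_def)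
    also have "\<dots> \<le> EU i J0 (splice i J0 sa t0)"
      using argmax \<open>t J0 \<in> avail G J0\<close> unfolding sa_def st_def by blast
    also have "\<dots> = EU i J0 (splice i J0 sa t)"
      by (rule cong[OF sa t sa t0(1) sa t True sa t0(1,2)]) (simp add: splice_def)
    finally show ?thesis .
  next
    case False
    then show ?thesis using EU_splice_if_not_strat_reaches[OF i J0 sa t] by simp
  qed
qed

lemma exists_optimal_from_upclosed:
  assumes i: "i \<in> players G" and F: "F \<subseteq> infosets G i"
    and up: "\<And>J J'. J \<in> F \<Longrightarrow> J' \<in> infosets G i \<Longrightarrow> precedes J J' \<Longrightarrow> J' \<in> F"
  shows "\<exists>s\<in>strategies G i. \<forall>J\<in>F. optimal_from i J s"
proof -
  have ia: "i \<in> agents G" using i by (simp add: agents_def)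
  have "finite F" using F finite_infosets finite_subset by blast
  then show ?thesis using F up
  proof (induction F rule: finite_remove_induct)
    case empty
    then show ?case using strategies_nonempty by blast
  next
    case (remove A)
    obtain J0 where J0: "J0 \<in> A" "\<And>J. J \<in> A \<Longrightarrow> precedes J J0 \<Longrightarrow> J = J0"
      using exists_minimal_infoset[OF ia remove.hyps(1,2) remove.prems(1)] by blast
    have J0i: "J0 \<in> infosets G i" using J0(1) remove.prems(1) by blast
    have up': "J' \<in> A - {J0}" if "J \<in> A - {J0}" "J' \<in> infosets G i" "precedes J J'" for J J'
      using that J0(2) remove.prems(2) by blast
    have "\<exists>s\<in>strategies G i. \<forall>J\<in>A - {J0}. optimal_from i J s"
    proof (rule remove.IH[OF J0(1)])
      show "A - {J0} \<subseteq> infosets G i" using remove.prems(1) by blast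
    qed (rule up')
    then obtain s where s: "s \<in> strategies G i" "\<And>J. J \<in> A - {J0} \<Longrightarrow> optimal_from i J s"
      by blast
    obtain t0 where t0: "t0 \<in> strategies G i" "strat_reaches G i t0 J0"
      using exists_strat_reaches[OF i J0i] by blast
    define f where "f c = EU i J0 (splice i J0 (s(J0 := c)) t0)" for c
    have fin: "finite (f ` avail G J0)" using finite_avail by simp
    obtain a where a: "a \<in> avail G J0" "f a = Max (f ` avail G J0)"
      using Max_in[OF fin] avail_nonempty[OF J0i] by (metis empty_is_image imageE)
    have "optimal_from i J0 (s(J0 := a))"
    proof (rule optimal_from_upd_argmax[OF i J0i s(1) _ t0 a(1)])
      show "optimal_from i J s" if "J \<in> infosets G i" "precedes J0 J" "J \<noteq> J0" for J
        using that s(2) remove.prems(2)[OF J0(1)] by blast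
      show "EU i J0 (splice i J0 (s(J0 := c)) t0) \<le> EU i J0 (splice i J0 (s(J0 := a)) t0)"
        if "c \<in> avail G J0" for c
        using Max_ge[OF fin imageI[OF that]] a(2) unfolding f_def by simp
    qed
    moreover have "optimal_from i J (s(J0 := a))" if "J \<in> A - {J0}" for J
      using s(2)[OF that] optimal_from_cong[of i J "s(J0 := a)" s] up'[OF that] by auto
    ultimately show ?case using fun_upd_in_strategies[OF s(1) J0i a(1)] by blast
  qed
qed

lemma optimal_from_imp_cont_rational_at:
  assumes i: "i \<in> players G" and J: "J \<in> infosets G i" and s: "s \<in> strategies G i"
    and opt: "optimal_from i J s"
  shows "cont_rational_at G u i J (b i J) s"
proof -
  obtain t0 where t0: "t0 \<in> strategies G i" "strat_reaches G i t0 J"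
    using exists_strat_reaches[OF i J] by blast
  define t where "t = splice i J s t0"
  have t: "t \<in> strategies G i" "strat_reaches G i t J"
    using splice_in_strategies[OF s t0(1)] strat_reaches_splice[OF i J s t0] t_def by auto
  have agree: "\<forall>I\<in>infosets G i. precedes J I \<longrightarrow> t I = s I" unfolding t_def splice_def by auto
  have "EU i J r \<le> EU i J t" if r: "r \<in> strategies G i" "strat_reaches G i r J" for r
  proof -
    have "EU i J r \<le> EU i J (splice i J s r)" using opt r(1) unfolding optimal_from_def by blast
    also have "\<dots> = EU i J t"
      using EU_cong_from[OF i J t(1) splice_in_strategies[OF s r(1)] t(2)
          strat_reaches_splice[OF i J s r]] agree
      unfolding splice_def by auto
    finally show ?thesis .
  qed
  then have "rational_at G u i J (b i J) t" using rational_at_iff_EU_max[OF i J t] by blast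
  then show ?thesis unfolding cont_rational_at_def using t agree by blast
qed

lemma backward_L1_nonempty:
  assumes "i \<in> players G"
  shows "backward_L1 G u b i \<noteq> {}"
  using exists_optimal_from_upclosed[OF assms order_refl] optimal_from_imp_cont_rational_at[OF assms]
  unfolding backward_L1_def by blast

end

theorem proposition5:
  fixes G :: "('p, 'a) efg"
    and u :: "'p \<Rightarrow> 'a list \<Rightarrow> real"
    and b :: "'p \<Rightarrow> 'a list set \<Rightarrow> ('p, 'a) profile pmf"
  assumes "wf_game G"
    and "\<forall>i\<in>players G. belief_system G i (b i) \<and> full_support G i (b i)"
  shows "Zof G (strong_L1 G u b) = Zof G (backward_L1 G u b)"
proof -
  interpret level1_game G u b using assms by unfold_locales
  have strong: "strong_L1 G u b j \<subseteq> strategies G j" and backward: "backward_L1 G u b j \<subseteq> strategies G j"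
    for j unfolding strong_L1_def backward_L1_def by auto
  have "Zof G (strong_L1 G u b) \<subseteq> Zof G (backward_L1 G u b)"
  proof (rule Zof_subset_if_agree_on_reached[OF strong backward])
    fix j s assume j: "j \<in> players G" and s: "s \<in> strong_L1 G u b j"
    obtain c where "c \<in> backward_L1 G u b j" using backward_L1_nonempty[OF j] by blast
    then have "patch_unreached j s c \<in> backward_L1 G u b j"
      by (rule patch_unreached_in_backward_L1[OF j s])
    moreover have "\<forall>I\<in>infosets G j. strat_reaches G j s I \<longrightarrow> patch_unreached j s c I = s I"
      by (simp add: patch_unreached_def)
    ultimately show "\<exists>s'\<in>backward_L1 G u b j.
        \<forall>I\<in>infosets G j. strat_reaches G j s I \<longrightarrow> s' I = s I" by blast
  qed
  moreover have "Zof G (backward_L1 G u b) \<subseteq> Zof G (strong_L1 G u b)"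
    using Zof_mono backward_L1_subset_strong_L1 by blast
  ultimately show ?thesis by blast
qed

end
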